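(* Let $T$ be a tree with at least two vertices, rooted at a vertex $r$ of degree one, and let $V_2$ be the set of vertices labeled 2 in the labeling described in the context. Then for every dominating set $D$ of $T$, $D\leftrightarrow_{|D|+1} V_2$.
   Context: Labeling of $T$ (rooted at a degree-one vertex $r$), from the leaves upwards: every leaf other than $r$ gets label 1; every non-root internal vertex $v$, once all its children are labeled, gets label 1 if all children of $v$ have label 3, label 2 if at least one child has label 1, and label 3 otherwise; the root $r$ gets label 3 if its unique child has label 2, and label 2 otherwise. A set $D\subseteq V(T)$ is a dominating set if every vertex is in $D$ or adjacent to a vertex of $D$. Two dominating sets $D,D'$ are adjacent if $|D\triangle D'|=1$. For dominating sets $D_p,D_q$ and an integer $k>0$, write $D_p\leftrightarrow_k D_q$ if there is a sequence $D_0=D_p,\dots,D_\ell=D_q$ ($\ell\ge0$) of dominating sets of $T$ with consecutive sets adjacent and $|D_i|\le k$ for all $i$. *)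

theory Defs
  imports Main
begin

definition graph :: "'a set \<Rightarrow> ('a \<Rightarrow> 'a \<Rightarrow> bool) \<Rightarrow> bool" where
  "graph V E \<longleftrightarrow> finite V \<and> (\<forall>x y. E x y \<longrightarrow> x \<in> V \<and> y \<in> V \<and> E y x \<and> x \<noteq> y)"

definition connected_graph :: "'a set \<Rightarrow> ('a \<Rightarrow> 'a \<Rightarrow> bool) \<Rightarrow> bool" where
  "connected_graph V E \<longleftrightarrow> (\<forall>x\<in>V. \<forall>y\<in>V. E\<^sup>*\<^sup>* x y)"

definition is_cycle :: "('a \<Rightarrow> 'a \<Rightarrow> bool) \<Rightarrow> 'a list \<Rightarrow> bool" where
  "is_cycle E xs \<longleftrightarrow> length xs \<ge> 3 \<and> distinct xs \<and>
     (\<forall>i. Suc i < length xs \<longrightarrow> E (xs ! i) (xs ! Suc i)) \<and> E (last xs) (hd xs)"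

definition tree :: "'a set \<Rightarrow> ('a \<Rightarrow> 'a \<Rightarrow> bool) \<Rightarrow> bool" where
  "tree V E \<longleftrightarrow> graph V E \<and> V \<noteq> {} \<and> connected_graph V E \<and> (\<nexists>xs. is_cycle E xs)"

definition degree :: "('a \<Rightarrow> 'a \<Rightarrow> bool) \<Rightarrow> 'a \<Rightarrow> nat" where
  "degree E v = card {u. E v u}"

definition dist :: "('a \<Rightarrow> 'a \<Rightarrow> bool) \<Rightarrow> 'a \<Rightarrow> 'a \<Rightarrow> nat" where
  "dist E x y = (LEAST n. (E ^^ n) x y)"

definition child :: "('a \<Rightarrow> 'a \<Rightarrow> bool) \<Rightarrow> 'a \<Rightarrow> 'a \<Rightarrow> 'a \<Rightarrow> bool" where
  "child E r v u \<longleftrightarrow> E v u \<and> dist E r u = Suc (dist E r v)"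

definition children :: "('a \<Rightarrow> 'a \<Rightarrow> bool) \<Rightarrow> 'a \<Rightarrow> 'a \<Rightarrow> 'a set" where
  "children E r v = {u. child E r v u}"

text \<open>L is the labeling of the paper (leaves up): it satisfies the defining rules at every vertex.
  A non-root vertex without children is a leaf other than r (label 1).\<close>
definition is_labeling :: "'a set \<Rightarrow> ('a \<Rightarrow> 'a \<Rightarrow> bool) \<Rightarrow> 'a \<Rightarrow> ('a \<Rightarrow> nat) \<Rightarrow> bool" where
  "is_labeling V E r L \<longleftrightarrow>
     (\<forall>v\<in>V. v \<noteq> r \<longrightarrow>
        (children E r v = {} \<longrightarrow> L v = 1) \<and>
        (children E r v \<noteq> {} \<longrightarrow>
           L v = (if \<forall>u\<in>children E r v. L u = 3 then 1
                  else if \<exists>u\<in>children E r v. L u = 1 then 2 else 3))) \<and>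
     (\<forall>c. children E r r = {c} \<longrightarrow> L r = (if L c = 2 then 3 else 2))"

definition dominating :: "'a set \<Rightarrow> ('a \<Rightarrow> 'a \<Rightarrow> bool) \<Rightarrow> 'a set \<Rightarrow> bool" where
  "dominating V E D \<longleftrightarrow> D \<subseteq> V \<and> (\<forall>v\<in>V. v \<in> D \<or> (\<exists>u\<in>D. E u v))"

definition ds_adjacent :: "'a set \<Rightarrow> 'a set \<Rightarrow> bool" where
  "ds_adjacent D D' \<longleftrightarrow> card ((D - D') \<union> (D' - D)) = 1"

definition reconf :: "'a set \<Rightarrow> ('a \<Rightarrow> 'a \<Rightarrow> bool) \<Rightarrow> nat \<Rightarrow> 'a set \<Rightarrow> 'a set \<Rightarrow> bool" where
  "reconf V E k Dp Dq \<longleftrightarrow> (\<exists>(l::nat) (f::nat \<Rightarrow> 'a set). f 0 = Dp \<and> f l = Dq \<and>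
     (\<forall>i\<le>l. dominating V E (f i) \<and> card (f i) \<le> k) \<and>
     (\<forall>i<l. ds_adjacent (f i) (f (Suc i))))"

end

theory Submission
  imports Defs
begin

text \<open>Induction on the size of the symmetric difference \<open>D \<triangle> V\<^sub>2\<close>. If \<open>V\<^sub>2 \<subset> D\<close>, delete a vertex
  of \<open>D - V\<^sub>2\<close>; since \<open>V\<^sub>2\<close> dominates, so does the result. Otherwise add a deepest vertex
  \<open>y \<in> V\<^sub>2 - D\<close> and then delete one vertex \<open>x \<notin> V\<^sub>2\<close> of \<open>D\<close> just below \<open>y\<close>: a child of \<open>y\<close>
  labelled 1, a grandchild of \<open>y\<close> labelled 3, or the child of the root when \<open>y = r\<close>. Every vertex
  that \<open>x\<close> dominated is still dominated by \<open>y\<close>, by the parent of \<open>x\<close>, or by a vertex labelled 2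
  below \<open>x\<close>, and the latter all lie in \<open>D\<close> because \<open>y\<close> was chosen deepest. Each round passes
  through sets of size at most \<open>|D| + 1\<close> and shrinks the symmetric difference.\<close>

lemma obtains_maximizer:
  fixes f :: "'a \<Rightarrow> 'b::linorder"
  assumes "finite A" "A \<noteq> {}"
  obtains x where "x \<in> A" "\<And>z. z \<in> A \<Longrightarrow> f z \<le> f x"
proof -
  obtain x where x: "x \<in> A" "Max (f ` A) = f x"
    using assms by (rule obtains_MAX)
  have "f z \<le> f x" if "z \<in> A" for z
    unfolding x(2)[symmetric] using assms(1) that by (intro Max_ge finite_imageI imageI)
  with x(1) show ?thesis by (rule that)
qed

section \<open>Shortest walks and cycles\<close>

lemma dist_le_relpowp: "(E ^^ n) x y \<Longrightarrow> dist E x y \<le> n"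
  unfolding dist_def by (rule Least_le)

lemma relpowp_dist: "(E ^^ n) x y \<Longrightarrow> (E ^^ dist E x y) x y"
  unfolding dist_def by (rule LeastI)

lemma dist_self [simp]: "dist E x x = 0"
  using dist_le_relpowp[where n = 0 and x = x and y = x] by simp

lemma geodesic_exists:
  assumes "(E ^^ n) x y"
  obtains f where "f 0 = x" "f (dist E x y) = y" "\<forall>i<dist E x y. E (f i) (f (Suc i))"
    "\<forall>i\<le>dist E x y. dist E x (f i) = i"
proof -
  define d where "d = dist E x y"
  obtain f where f: "f 0 = x" "f d = y" "\<forall>i<d. E (f i) (f (Suc i))"
    using relpowp_dist[OF assms] relpowp_fun_conv unfolding d_def by metis
  have prefix: "(E ^^ i) x (f i)" if "i \<le> d" for i
    using f that by (auto simp: relpowp_fun_conv)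
  have suffix: "(E ^^ (d - i)) (f i) y" if "i \<le> d" for i
    using f that by (auto simp: relpowp_fun_conv intro!: exI[of _ "\<lambda>j. f (i + j)"])
  have "dist E x (f i) = i" if "i \<le> d" for i
  proof -
    have "(E ^^ (dist E x (f i) + (d - i))) x y"
      using relpowp_dist[OF prefix[OF that]] suffix[OF that] by (auto simp: relpowp_add)
    then have "d \<le> dist E x (f i) + (d - i)"
      unfolding d_def by (rule dist_le_relpowp)
    with dist_le_relpowp[OF prefix[OF that]] that show ?thesis by linarith
  qed
  with f that show ?thesis unfolding d_def by blast
qed

lemma is_cycle_iff:
  "is_cycle E xs \<longleftrightarrow> 3 \<le> length xs \<and> distinct xs \<and> successively E xs \<and> E (last xs) (hd xs)"
  unfolding is_cycle_def successively_conv_nth ..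

text \<open>Walking both walks back one level at a time, their endpoints are absorbed into the
  connecting path \<open>ws\<close>, which stays above the current level, until the walks meet.\<close>

lemma layered_walks_cycle:
  fixes d :: "'a \<Rightarrow> nat"
  assumes "symp E" and "f 0 = g 0"
    and "\<forall>i<n. E (f i) (f (Suc i))" and "\<forall>i<n. E (g i) (g (Suc i))"
    and "\<forall>i\<le>n. d (f i) = i" and "\<forall>i\<le>n. d (g i) = i"
    and "f n \<noteq> g n" and "successively E (f n # ws @ [g n])"
    and "distinct ws" and "\<forall>w\<in>set ws. n < d w"
  shows "\<exists>xs. is_cycle E xs"
  using assms(3-)
proof (induction n arbitrary: ws)
  case 0
  then show ?case using assms(2) by simp
next
  case (Suc m)
  have f_edge: "E (f m) (f (Suc m))" and g_edge: "E (g (Suc m)) (g m)"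
    using Suc.prems(1,2) sympD[OF assms(1)] by auto
  have depths: "d (f m) = m" "d (f (Suc m)) = Suc m" "d (g m) = m" "d (g (Suc m)) = Suc m"
    using Suc.prems(3,4) by auto
  show ?case
  proof (cases "f m = g m")
    case True
    let ?xs = "f m # f (Suc m) # ws @ [g (Suc m)]"
    have "f m \<notin> set (f (Suc m) # ws @ [g (Suc m)])" "f (Suc m) \<notin> set (ws @ [g (Suc m)])"
      "g (Suc m) \<notin> set ws"
      using Suc.prems(5,8) depths by (auto dest: arg_cong[where f = d])
    then have "is_cycle E ?xs"
      unfolding is_cycle_iff using Suc.prems(6,7) f_edge g_edge True by auto
    then show ?thesis by blast
  next
    case False
    let ?ws = "f (Suc m) # ws @ [g (Suc m)]"
    have "successively E (?ws @ [g m])"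
      using Suc.prems(6) g_edge by (subst successively_append_iff) simp
    then have "successively E (f m # ?ws @ [g m])"
      using f_edge by simp
    moreover have "distinct ?ws" "\<forall>w\<in>set ?ws. m < d w"
      using Suc.prems depths by auto
    ultimately show ?thesis using Suc.IH[of ?ws] Suc.prems False by auto
  qed
qed

section \<open>Rooted trees\<close>

locale rooted_tree =
  fixes V :: "'a set" and E :: "'a \<Rightarrow> 'a \<Rightarrow> bool" and r :: 'a
  assumes tree: "tree V E" and root_in_V: "r \<in> V"
begin

abbreviation depth :: "'a \<Rightarrow> nat" where
  "depth \<equiv> dist E r"

lemma graph: "graph V E"
  using tree unfolding tree_def by simp

lemma finite_V: "finite V"
  using graph unfolding graph_def by simp

lemma symp: "symp E"
  using graph unfolding graph_def by (auto intro: sympI)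

lemma edge_sym: "E a b \<Longrightarrow> E b a"
  using symp by (rule sympD)

lemma edge_in_V: "E a b \<Longrightarrow> a \<in> V \<and> b \<in> V"
  using graph unfolding graph_def by blast

lemma edge_neq: "E a b \<Longrightarrow> a \<noteq> b"
  using graph unfolding graph_def by blast

lemma no_cycle: "\<not> is_cycle E xs"
  using tree unfolding tree_def by blast

lemma walk_from_root:
  assumes "v \<in> V"
  obtains n where "(E ^^ n) r v"
proof -
  have "E\<^sup>*\<^sup>* r v"
    using tree root_in_V assms unfolding tree_def connected_graph_def by blast
  then show ?thesis using that by (auto simp: rtranclp_power)
qed

lemma geodesic_from_root:
  assumes "v \<in> V"
  obtains f where "f 0 = r" "f (depth v) = v" "\<forall>i<depth v. E (f i) (f (Suc i))"
    "\<forall>i\<le>depth v. depth (f i) = i"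
  using walk_from_root[OF assms] geodesic_exists by metis

lemma depth_edge_le:
  assumes "E a b"
  shows "depth b \<le> Suc (depth a)"
proof -
  obtain n where "(E ^^ n) r a"
    using walk_from_root edge_in_V[OF assms] by blast
  from relpowp_dist[OF this] have "(E ^^ Suc (depth a)) r b"
    using assms by (rule relpowp_Suc_I)
  then show ?thesis by (rule dist_le_relpowp)
qed

lemma equal_depth_cycle:
  assumes "a \<in> V" "b \<in> V" "a \<noteq> b" "depth a = depth b"
    and "successively E (a # ws @ [b])" "distinct ws" "\<forall>w\<in>set ws. depth a < depth w"
  shows False
proof -
  obtain f where f: "f 0 = r" "f (depth a) = a" "\<forall>i<depth a. E (f i) (f (Suc i))"
    "\<forall>i\<le>depth a. depth (f i) = i"
    using geodesic_from_root[OF assms(1)] .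
  obtain g where g: "g 0 = r" "g (depth a) = b" "\<forall>i<depth a. E (g i) (g (Suc i))"
    "\<forall>i\<le>depth a. depth (g i) = i"
    using geodesic_from_root[OF assms(2)] unfolding \<open>depth a = depth b\<close> .
  have "\<exists>xs. is_cycle E xs"
    using layered_walks_cycle[OF symp _ f(3) g(3) f(4) g(4) _ _ assms(6,7)] f g assms(3,5)
    by simp
  then show False using no_cycle by blast
qed

lemma edge_child_or_parent:
  assumes "E a b"
  shows "child E r a b \<or> child E r b a"
proof -
  have "a \<in> V" "b \<in> V" "a \<noteq> b" using assms edge_in_V edge_neq by auto
  then have "depth a \<noteq> depth b"
    using equal_depth_cycle[where ws = "[]"] assms by auto
  moreover have "depth b \<le> Suc (depth a)" "depth a \<le> Suc (depth b)"
    using assms edge_sym depth_edge_le by auto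
  ultimately have "depth b = Suc (depth a) \<or> depth a = Suc (depth b)"
    by linarith
  then show ?thesis
    unfolding child_def using assms edge_sym[OF assms] by blast
qed

lemma parent_unique:
  assumes "child E r p v" "child E r q v"
  shows "p = q"
  using assms equal_depth_cycle[of p q "[v]"] edge_in_V edge_sym
  unfolding child_def by auto

lemma parent_exists:
  assumes "v \<in> V" "v \<noteq> r"
  obtains p where "child E r p v"
proof -
  obtain f where f: "f 0 = r" "f (depth v) = v" "\<forall>i<depth v. E (f i) (f (Suc i))"
    "\<forall>i\<le>depth v. depth (f i) = i"
    using geodesic_from_root[OF assms(1)] .
  then obtain k where "depth v = Suc k"
    using assms(2) by (cases "depth v") auto
  then have "child E r (f k) v"
    unfolding child_def using f by auto
  then show ?thesis by (rule that)
qed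

lemma child_in_V: "child E r a b \<Longrightarrow> a \<in> V \<and> b \<in> V"
  unfolding child_def using edge_in_V by blast

lemma child_neq: "child E r a b \<Longrightarrow> a \<noteq> b"
  unfolding child_def using edge_neq by blast

end

section \<open>Dominating sets and reconfiguration sequences\<close>

abbreviation dominated :: "('a \<Rightarrow> 'a \<Rightarrow> bool) \<Rightarrow> 'a set \<Rightarrow> 'a \<Rightarrow> bool" where
  "dominated E D v \<equiv> v \<in> D \<or> (\<exists>u\<in>D. E u v)"

lemma dominating_insert: "dominating V E D \<Longrightarrow> y \<in> V \<Longrightarrow> dominating V E (insert y D)"
  unfolding dominating_def by blast

lemma dominating_mono: "dominating V E A \<Longrightarrow> A \<subseteq> B \<Longrightarrow> B \<subseteq> V \<Longrightarrow> dominating V E B"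
  unfolding dominating_def by blast

lemma dominating_Diff_singletonI:
  assumes "dominating V E D" and "\<And>z. z = x \<or> E x z \<Longrightarrow> dominated E (D - {x}) z"
  shows "dominating V E (D - {x})"
  using assms unfolding dominating_def by blast

lemma ds_adjacent_insert: "y \<notin> D \<Longrightarrow> ds_adjacent D (insert y D)"
  unfolding ds_adjacent_def by (subgoal_tac "D - insert y D \<union> (insert y D - D) = {y}") auto

lemma ds_adjacent_remove: "x \<in> D \<Longrightarrow> ds_adjacent D (D - {x})"
  unfolding ds_adjacent_def by (subgoal_tac "D - (D - {x}) \<union> (D - {x} - D) = {x}") auto

lemma reconf_refl: "dominating V E A \<Longrightarrow> card A \<le> k \<Longrightarrow> reconf V E k A A"
  unfolding reconf_def by (rule exI[of _ 0], rule exI[of _ "\<lambda>_. A"]) auto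

lemma reconf_step:
  assumes "dominating V E A" "dominating V E B" "card A \<le> k" "card B \<le> k" "ds_adjacent A B"
  shows "reconf V E k A B"
  unfolding reconf_def
  using assms by (intro exI[of _ 1] exI[of _ "\<lambda>i. if i = 0 then A else B"]) (auto simp: le_Suc_eq)

lemma reconf_mono: "reconf V E k A B \<Longrightarrow> k \<le> k' \<Longrightarrow> reconf V E k' A B"
  unfolding reconf_def by (blast intro: order_trans)

lemma reconf_trans:
  assumes "reconf V E k A B" "reconf V E k B C"
  shows "reconf V E k A C"
proof -
  obtain l f where f: "f 0 = A" "f l = B" "\<forall>i\<le>l. dominating V E (f i) \<and> card (f i) \<le> k"
    "\<forall>i<l. ds_adjacent (f i) (f (Suc i))"
    using assms(1) unfolding reconf_def by blast
  obtain m g where g: "g 0 = B" "g m = C" "\<forall>i\<le>m. dominating V E (g i) \<and> card (g i) \<le> k"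
    "\<forall>i<m. ds_adjacent (g i) (g (Suc i))"
    using assms(2) unfolding reconf_def by blast
  define h where "h i = (if i \<le> l then f i else g (i - l))" for i
  have "ds_adjacent (h i) (h (Suc i))" if "i < l + m" for i
  proof (cases "i < l")
    case True
    then show ?thesis using f(4) unfolding h_def by auto
  next
    case False
    then have "h i = g (i - l)" "h (Suc i) = g (Suc (i - l))"
      using f(2) g(1) unfolding h_def by (auto simp: Suc_diff_le)
    then show ?thesis using g(4) that False by auto
  qed
  moreover have "h 0 = A" "h (l + m) = C" "\<forall>i\<le>l + m. dominating V E (h i) \<and> card (h i) \<le> k"
    using f g unfolding h_def by auto
  ultimately show ?thesis
    unfolding reconf_def by blast
qed

section \<open>The labeling\<close>

locale labeled_tree = rooted_tree +
  fixes L :: "'a \<Rightarrow> nat"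
  assumes root_degree: "degree E r = 1" and labeling: "is_labeling V E r L"
begin

abbreviation V2 :: "'a set" where
  "V2 \<equiv> {v \<in> V. L v = 2}"

lemma root_child:
  obtains c where "\<And>u. E r u \<longleftrightarrow> u = c" "child E r r c" "L r = (if L c = 2 then 3 else 2)"
proof -
  obtain c where c: "{u. E r u} = {c}"
    using root_degree card_1_singletonE unfolding degree_def by blast
  then have "E r c" by auto
  then have walk: "(E ^^ 1) r c" unfolding relpowp_1 .
  have "depth c \<noteq> 0"
    using relpowp_dist[OF walk] edge_neq[OF \<open>E r c\<close>] by (metis relpowp.simps(1))
  with dist_le_relpowp[OF walk] have "depth c = Suc (depth r)" by simp
  then have "child E r r c"
    unfolding child_def using \<open>E r c\<close> by simp
  moreover have "children E r r = {c}"
    using c \<open>child E r r c\<close> unfolding children_def child_def by auto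
  ultimately show ?thesis
    using that c labeling unfolding is_labeling_def by (metis mem_Collect_eq singleton_iff)
qed

text \<open>A vertex without children gets label 1 here too, since the universal condition holds
  vacuously.\<close>

lemma label_nonroot:
  assumes "v \<in> V" "v \<noteq> r"
  shows "L v = (if \<forall>u. child E r v u \<longrightarrow> L u = 3 then 1
                else if \<exists>u. child E r v u \<and> L u = 1 then 2 else 3)"
proof -
  have "children E r v = {} \<longrightarrow> L v = 1"
    and "children E r v \<noteq> {} \<longrightarrow> L v = (if \<forall>u\<in>children E r v. L u = 3 then 1
            else if \<exists>u\<in>children E r v. L u = 1 then 2 else 3)"
    using labeling assms unfolding is_labeling_def by blast+
  then show ?thesis
    unfolding children_def by (cases "\<exists>u. child E r v u") auto
qed

lemma label_nonroot_iff:
  assumes "v \<in> V" "v \<noteq> r"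
  shows "L v = 1 \<longleftrightarrow> (\<forall>u. child E r v u \<longrightarrow> L u = 3)"
    and "L v = 2 \<longleftrightarrow> \<not> (\<forall>u. child E r v u \<longrightarrow> L u = 3) \<and> (\<exists>u. child E r v u \<and> L u = 1)"
    and "L v = 3 \<longleftrightarrow> \<not> (\<forall>u. child E r v u \<longrightarrow> L u = 3) \<and> \<not> (\<exists>u. child E r v u \<and> L u = 1)"
  by (subst label_nonroot[OF assms]; simp)+

lemma label_root_ne_1: "L r \<noteq> 1"
  by (rule root_child) simp

lemma label_range: "v \<in> V \<Longrightarrow> L v = 1 \<or> L v = 2 \<or> L v = 3"
proof (cases "v = r")
  case True
  then show ?thesis by (rule_tac root_child) simp
qed (simp add: label_nonroot)

lemma child_of_label_1:
  assumes "child E r v u" "L v = 1"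
  shows "L u = 3"
proof -
  have "v \<noteq> r" using assms(2) label_root_ne_1 by blast
  then show ?thesis
    using assms label_nonroot_iff(1)[of v] child_in_V by blast
qed

lemma child_of_label_3:
  assumes "child E r v u" "L v = 3"
  shows "L u \<noteq> 1"
proof (cases "v = r")
  case True
  obtain c where "\<And>u. E r u \<longleftrightarrow> u = c" "child E r r c" "L r = (if L c = 2 then 3 else 2)"
    by (rule root_child) blast
  moreover have "E r u" using assms(1) True unfolding child_def by simp
  ultimately show ?thesis
    using assms(2) True by (auto split: if_splits)
next
  case False
  then show ?thesis
    using assms label_nonroot_iff(3)[of v] child_in_V by blast
qed

lemma label_3_has_child_2:
  assumes "v \<in> V" "L v = 3"
  obtains u where "child E r v u" "L u = 2"
proof (cases "v = r")
  case True
  obtain c where "\<And>u. E r u \<longleftrightarrow> u = c" "child E r r c" "L r = (if L c = 2 then 3 else 2)"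
    by (rule root_child) blast
  then have "L c = 2" using assms(2) True by (simp split: if_splits)
  with \<open>child E r r c\<close> show ?thesis using True by (rule_tac that) simp_all
next
  case False
  then obtain u where u: "child E r v u" "L u \<noteq> 3" "L u \<noteq> 1"
    using assms label_nonroot_iff(3)[of v] by blast
  then have "L u = 2" using label_range child_in_V by blast
  with u(1) show ?thesis by (rule that)
qed

lemma label_2_has_child_1:
  assumes "v \<in> V" "v \<noteq> r" "L v = 2"
  obtains u where "child E r v u" "L u = 1"
  using assms label_nonroot_iff(2)[of v] by blast

lemma parent_of_label_1:
  assumes "child E r p v" "L v = 1"
  shows "L p = 2"
proof (cases "p = r")
  case True
  obtain c where "\<And>u. E r u \<longleftrightarrow> u = c" "child E r r c" "L r = (if L c = 2 then 3 else 2)"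
    by (rule root_child) blast
  moreover have "E r v" using assms(1) True unfolding child_def by simp
  ultimately show ?thesis
    using assms(2) True by simp
next
  case False
  have "\<not> (\<forall>u. child E r p u \<longrightarrow> L u = 3)" "\<exists>u. child E r p u \<and> L u = 1"
    using assms by auto
  then show ?thesis
    using label_nonroot_iff(2)[of p] False assms(1) child_in_V by blast
qed

lemma dominating_V2: "dominating V E V2"
  unfolding dominating_def
proof (intro conjI ballI)
  fix v assume v: "v \<in> V"
  consider (label_1) "L v = 1" | (label_2) "L v = 2" | (label_3) "L v = 3"
    using label_range[OF v] by blast
  then show "dominated E V2 v"
  proof cases
    case label_1
    then have "v \<noteq> r" using label_root_ne_1 by blast
    then obtain p where p: "child E r p v" using parent_exists[OF v] by blast
    then have "L p = 2" "p \<in> V" "E p v"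
      using parent_of_label_1[OF p label_1] child_in_V[OF p] unfolding child_def by auto
    then show ?thesis by blast
  next
    case label_3
    then obtain u where u: "child E r v u" "L u = 2" using label_3_has_child_2 v by blast
    then have "u \<in> V" "E u v"
      using child_in_V[OF u(1)] edge_sym unfolding child_def by auto
    then show ?thesis using u(2) by blast
  qed (use v in simp)
qed simp

section \<open>Reconfiguration towards \<open>V\<^sub>2\<close>\<close>

text \<open>The vertices dominated by \<open>x\<close> are taken over by its parent \<open>p\<close> and by the vertices
  labelled 2 among its children and grandchildren.\<close>

lemma dominating_remove_child:
  assumes dom: "dominating V E D"
    and x: "child E r p x" "L x \<noteq> 2"
    and parent: "dominated E (D - {x}) p" "p \<in> D \<or> L x = 3"
    and deep: "\<And>z. z \<in> V \<Longrightarrow> L z = 2 \<Longrightarrow> depth x < depth z \<Longrightarrow> z \<in> D"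
  shows "dominating V E (D - {x})"
proof (rule dominating_Diff_singletonI[OF dom])
  have label_3_dominated: "dominated E (D - {x}) w"
    if w: "w \<in> V" "L w = 3" "depth x \<le> depth w" for w
  proof -
    obtain u where u: "child E r w u" "L u = 2"
      using label_3_has_child_2 w(1,2) by blast
    then have "u \<in> D" "u \<noteq> x" "E u w"
      using deep[of u] child_in_V[OF u(1)] w(3) x(2) edge_sym unfolding child_def by auto
    then show ?thesis by blast
  qed
  fix z assume "z = x \<or> E x z"
  then consider (self) "z = x" | (child) "child E r x z" | (parent) "child E r z x"
    using edge_child_or_parent by blast
  then show "dominated E (D - {x}) z"
  proof cases
    case self
    show ?thesis
    proof (cases "p \<in> D")
      case True
      then show ?thesis using self x(1) child_neq[OF x(1)] unfolding child_def by blast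
    next
      case False
      then show ?thesis using self parent(2) label_3_dominated child_in_V[OF x(1)] by blast
    qed
  next
    case child
    have "L x = 1 \<or> L x = 3" using label_range child_in_V[OF x(1)] x(2) by blast
    then have "L z \<noteq> 1" using child_of_label_1[OF child] child_of_label_3[OF child] by auto
    then consider "L z = 2" | "L z = 3" using label_range child_in_V[OF child] by blast
    then show ?thesis
    proof cases
      case 1
      then show ?thesis
        using deep[of z] child child_in_V[OF child] child_neq[OF child] unfolding child_def by auto
    next
      case 2
      then show ?thesis using label_3_dominated child child_in_V[OF child] unfolding child_def by simp
    qed
  next
    case parent
    then show ?thesis using parent_unique[OF parent x(1)] \<open>dominated E (D - {x}) p\<close> by simp
  qed
qed

lemma exchange_into_V2:
  assumes dom: "dominating V E D" and y: "y \<in> V2" "y \<notin> D"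
    and deepest: "\<And>z. z \<in> V2 - D \<Longrightarrow> depth z \<le> depth y"
  obtains x where "x \<in> D" "L x \<noteq> 2" "dominating V E (insert y D - {x})"
proof -
  let ?D = "insert y D"
  have remove: "dominating V E (?D - {x})"
    if "child E r p x" "L x \<noteq> 2" "dominated E (?D - {x}) p" "p \<in> ?D \<or> L x = 3"
      "depth y < depth x" for p x
  proof (rule dominating_remove_child[OF dominating_insert[OF dom] that(1-4)])
    fix z assume "z \<in> V" "L z = 2" "depth x < depth z"
    then show "z \<in> ?D" using deepest[of z] that(5) by (cases "z \<in> D") auto
  qed (use y(1) in simp)
  show ?thesis
  proof (cases "y = r")
    case True
    obtain c where c: "\<And>u. E r u \<longleftrightarrow> u = c" "child E r r c" "L r = (if L c = 2 then 3 else 2)"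
      by (rule root_child) blast
    have "L r = 2" using y(1) True by simp
    then have "L c \<noteq> 2" using c(3) by (cases "L c = 2") simp_all
    obtain t where t: "t \<in> D" "E t r"
      using dom y True unfolding dominating_def by blast
    then have "c \<in> D" using c(1) edge_sym[OF t(2)] by simp
    moreover note \<open>L c \<noteq> 2\<close>
    moreover have "dominating V E (?D - {c})"
      by (rule remove[OF c(2) \<open>L c \<noteq> 2\<close>])
        (use True child_neq[OF c(2)] c(2) in \<open>auto simp: child_def\<close>)
    ultimately show ?thesis by (rule that)
  next
    case False
    obtain u where u: "child E r y u" "L u = 1"
      using label_2_has_child_1 False y(1) by blast
    show ?thesis
    proof (cases "u \<in> D")
      case True
      have "dominating V E (?D - {u})"
        by (rule remove[OF u(1)]) (use u child_neq[OF u(1)] in \<open>auto simp: child_def\<close>)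
      then show ?thesis using True u(2) by (rule_tac that) auto
    next
      case False
      obtain t where t: "t \<in> D" "E t u"
        using dom False child_in_V[OF u(1)] unfolding dominating_def by blast
      have "\<not> child E r t u" using parent_unique[OF _ u(1)] t(1) y(2) by blast
      then have t_child: "child E r u t" using edge_child_or_parent[OF t(2)] by blast
      have "L t = 3" using child_of_label_1[OF t_child u(2)] .
      have "dominating V E (?D - {t})"
        by (rule remove[OF t_child])
          (use \<open>L t = 3\<close> u(1) t_child t(1) y(2) in \<open>auto simp: child_def\<close>)
      then show ?thesis using t(1) \<open>L t = 3\<close> by (rule_tac that) auto
    qed
  qed
qed

lemma step_towards_V2:
  assumes dom: "dominating V E D" and "D \<noteq> V2"
  obtains D' where "dominating V E D'" "card D' \<le> card D"
    "(D' - V2) \<union> (V2 - D') \<subset> (D - V2) \<union> (V2 - D)" "reconf V E (Suc (card D)) D D'"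
proof -
  have finite_D: "finite D"
    using dom finite_V finite_subset unfolding dominating_def by blast
  show ?thesis
  proof (cases "V2 \<subseteq> D")
    case True
    then obtain x where x: "x \<in> D" "x \<notin> V2" using assms(2) by blast
    have dom_del: "dominating V E (D - {x})"
      by (rule dominating_mono[OF dominating_V2]) (use True x dom in \<open>auto simp: dominating_def\<close>)
    have card_del: "card (D - {x}) \<le> card D" by (rule card_Diff1_le)
    have "(D - {x} - V2) \<union> (V2 - (D - {x})) \<subset> (D - V2) \<union> (V2 - D)"
      using x True by blast
    moreover have "reconf V E (Suc (card D)) D (D - {x})"
      using reconf_step[OF dom dom_del] card_del ds_adjacent_remove[OF x(1)] by simp
    ultimately show ?thesis by (rule that[OF dom_del card_del])
  next
    case False
    have "finite (V2 - D)" using finite_V by simp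
    moreover have "V2 - D \<noteq> {}" using False by blast
    ultimately obtain y where y: "y \<in> V2 - D"
      and deepest: "\<And>z. z \<in> V2 - D \<Longrightarrow> depth z \<le> depth y"
      by (rule obtains_maximizer[where f = depth]) blast+
    from y have "y \<in> V2" "y \<notin> D" by simp_all
    then obtain x where x: "x \<in> D" "L x \<noteq> 2"
      and dom_swap: "dominating V E (insert y D - {x})"
      by (rule exchange_into_V2[OF dom _ _ deepest])
    have "x \<noteq> y" using x(1) \<open>y \<notin> D\<close> by blast
    have dom_ins: "dominating V E (insert y D)"
      using dominating_insert[OF dom] y by simp
    have card_ins: "card (insert y D) = Suc (card D)" using finite_D \<open>y \<notin> D\<close> by simp
    have card_swap: "card (insert y D - {x}) = card D"
      using card_ins x(1) \<open>x \<noteq> y\<close> by simp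
    have "reconf V E (Suc (card D)) D (insert y D)"
      using reconf_step[OF dom dom_ins] card_ins ds_adjacent_insert[OF \<open>y \<notin> D\<close>] by simp
    moreover have "reconf V E (Suc (card D)) (insert y D) (insert y D - {x})"
      using reconf_step[OF dom_ins dom_swap] card_ins card_swap
        ds_adjacent_remove[OF insertI2[OF x(1)]] by simp
    ultimately have "reconf V E (Suc (card D)) D (insert y D - {x})"
      by (rule reconf_trans)
    moreover have "(insert y D - {x} - V2) \<union> (V2 - (insert y D - {x})) \<subset> (D - V2) \<union> (V2 - D)"
      using x y \<open>x \<noteq> y\<close> by blast
    ultimately show ?thesis using that[OF dom_swap] card_swap by simp
  qed
qed

lemma reconf_to_V2:
  assumes "dominating V E D" "card D \<le> K"
  shows "reconf V E (Suc K) D V2"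
  using assms
proof (induction "card ((D - V2) \<union> (V2 - D))" arbitrary: D rule: less_induct)
  case less
  show ?case
  proof (cases "D = V2")
    case True
    then show ?thesis using reconf_refl[OF less.prems(1), of "Suc K"] less.prems(2) by simp
  next
    case False
    then obtain D' where D': "dominating V E D'" "card D' \<le> card D"
      "(D' - V2) \<union> (V2 - D') \<subset> (D - V2) \<union> (V2 - D)" "reconf V E (Suc (card D)) D D'"
      by (rule step_towards_V2[OF less.prems(1)])
    have "D \<subseteq> V" using less.prems(1) unfolding dominating_def by simp
    then have "finite ((D - V2) \<union> (V2 - D))"
      using finite_V by (simp add: finite_subset)
    then have "card ((D' - V2) \<union> (V2 - D')) < card ((D - V2) \<union> (V2 - D))"
      using D'(3) by (rule psubset_card_mono)
    then have "reconf V E (Suc K) D' V2"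
      using D'(1) le_trans[OF D'(2) less.prems(2)] by (rule less.hyps)
    moreover have "reconf V E (Suc K) D D'"
      using reconf_mono[OF D'(4)] less.prems(2) by simp
    ultimately show ?thesis by (rule reconf_trans[rotated])
  qed
qed

end

theorem lemma10:
  fixes V :: "'a set" and E :: "'a \<Rightarrow> 'a \<Rightarrow> bool" and r :: 'a
    and L :: "'a \<Rightarrow> nat" and D :: "'a set"
  assumes "tree V E" and "card V \<ge> 2" and "r \<in> V" and "degree E r = 1"
    and "is_labeling V E r L"
    and "dominating V E D"
  shows "reconf V E (card D + 1) D {v \<in> V. L v = 2}"
proof -
  interpret labeled_tree V E r L
    using assms(1,3-5) by unfold_locales
  show ?thesis
    using reconf_to_V2[OF assms(6) order_refl] by simp
qed

end
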